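(* Let $X$ be a peripherally Hausdorff space and let $f:X\to X$ be a continuous weak+ topological contraction. Then $f$ has a unique fixed point.
   Context: For $x\in X$, $[x]:=\bigcap\{\overline{U}:U \text{ an open neighbourhood of } x\}$. A space is $0$-Hausdorff if it is Hausdorff; for an ordinal $\alpha>0$, a $T_1$ space $X$ is $\alpha$-Hausdorff if for every $x\in X$ the subspace $[x]$ is $\beta_x$-Hausdorff for some ordinal $\beta_x<\alpha$; $X$ is peripherally Hausdorff if it is $\alpha$-Hausdorff for some ordinal $\alpha$. A mapping $f:X\to X$ is a weak+ topological contraction if for every open cover $\mathcal{U}$ of $X$ and every pair of points $x,y\in X$ there exist $n_0\in\mathbb{N}_0$ and $U\in\mathcal{U}$ such that $f^n[\{x,y\}]\subseteq U$ for all $n\ge n_0$ ($f^n$ the $n$-fold iterate). *)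

theory Defs
  imports "HOL-Analysis.Analysis"
begin

text \<open>The set [x]: intersection of the closures of all open neighbourhoods of x.\<close>
definition nbhd_closure_core :: "'a topology \<Rightarrow> 'a \<Rightarrow> 'a set" where
  "nbhd_closure_core X x = \<Inter> {X closure_of U | U. openin X U \<and> x \<in> U}"

text \<open>Peripherally Hausdorff = alpha-Hausdorff for some ordinal alpha; the union over all
  ordinals of the classes of alpha-Hausdorff spaces is the least class closed under the
  two rules below (transfinite iteration of a monotone operator).\<close>
inductive peripherally_Hausdorff :: "'a topology \<Rightarrow> bool" where
  zero: "Hausdorff_space X \<Longrightarrow> peripherally_Hausdorff X"
| step: "t1_space X \<Longrightarrow>
          (\<forall>x\<in>topspace X. peripherally_Hausdorff (subtopology X (nbhd_closure_core X x))) \<Longrightarrow>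
          peripherally_Hausdorff X"

definition weak_plus_contraction :: "'a topology \<Rightarrow> ('a \<Rightarrow> 'a) \<Rightarrow> bool" where
  "weak_plus_contraction X f \<longleftrightarrow>
     (\<forall>\<U>. (\<forall>U\<in>\<U>. openin X U) \<and> topspace X \<subseteq> \<Union>\<U> \<longrightarrow>
        (\<forall>x\<in>topspace X. \<forall>y\<in>topspace X.
           \<exists>n0::nat. \<exists>U\<in>\<U>. \<forall>n\<ge>n0. (f ^^ n) ` {x, y} \<subseteq> U))"

end

theory Submission
  imports Defs
begin

text \<open>Applying the weak+ property to the cover by the open sets that do not eventually contain
  the orbit of a point shows that the orbit has a limit. The set \<open>L\<close> of all its limits is
  closed, nonempty and \<open>f\<close>-invariant, \<open>f\<close> restricted to \<open>L\<close> is again a continuous weak+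
  contraction, and any two limits of one sequence are inseparable, so \<open>L \<subseteq> [p]\<close> for
  every \<open>p \<in> L\<close>. In a Hausdorff space \<open>[p] = {p}\<close>, so \<open>p\<close> is fixed; otherwise \<open>L\<close> is a
  subspace of \<open>[p]\<close>, and induction on the definition of peripheral Hausdorffness applies.
  Uniqueness holds in every T1 space: for two fixed points \<open>x \<noteq> y\<close> the cover by \<open>X - {x}\<close> and \<open>X - {y}\<close>
  contradicts the weak+ property.\<close>

lemma nbhd_closure_core_Hausdorff_subset:
  assumes "Hausdorff_space X" and "p \<in> topspace X"
  shows "nbhd_closure_core X p \<subseteq> {p}"
proof
  fix q
  assume "q \<in> nbhd_closure_core X p"
  then have q_closure: "q \<in> X closure_of U" if "openin X U" "p \<in> U" for U
    using that unfolding nbhd_closure_core_def by blast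
  show "q \<in> {p}"
  proof (rule ccontr)
    assume "q \<notin> {p}"
    moreover have "q \<in> topspace X"
      using q_closure[of "topspace X"] assms(2) closure_of_subset_topspace by fastforce
    ultimately obtain U V where "openin X U" "openin X V" "p \<in> U" "q \<in> V" "disjnt U V"
      using assms unfolding Hausdorff_space_def by blast
    then show False
      using q_closure by (auto simp: in_closure_of disjnt_def)
  qed
qed

lemma nbhd_closure_core_subtopology_subset:
  assumes "p \<in> S"
  shows "nbhd_closure_core (subtopology X S) p \<subseteq> nbhd_closure_core X p"
  unfolding nbhd_closure_core_def [of X]
proof (rule Inter_greatest)
  fix C
  assume "C \<in> {X closure_of U | U. openin X U \<and> p \<in> U}"
  then obtain U where U: "openin X U" "p \<in> U" and C: "C = X closure_of U"
    by blast
  have "openin (subtopology X S) (U \<inter> S)"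
    using U(1) by (rule openin_subtopology_Int)
  then have "nbhd_closure_core (subtopology X S) p \<subseteq> subtopology X S closure_of (U \<inter> S)"
    unfolding nbhd_closure_core_def using U(2) assms by (intro Inter_lower) blast
  also have "\<dots> \<subseteq> X closure_of (U \<inter> S)"
    by (rule closure_of_subtopology_subset)
  also have "\<dots> \<subseteq> X closure_of U"
    by (rule closure_of_mono) blast
  finally show "nbhd_closure_core (subtopology X S) p \<subseteq> C"
    unfolding C .
qed

lemma limitin_in_nbhd_closure_core:
  assumes "limitin X s p F" and "limitin X s q F" and "F \<noteq> bot"
  shows "q \<in> nbhd_closure_core X p"
  unfolding nbhd_closure_core_def
proof clarify
  fix U
  assume U: "openin X U" "p \<in> U"
  have "\<exists>y. y \<in> U \<and> y \<in> T" if T: "openin X T" "q \<in> T" for T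
  proof -
    have "eventually (\<lambda>i. s i \<in> U) F" "eventually (\<lambda>i. s i \<in> T) F"
      using limitinD[OF assms(1) U] limitinD[OF assms(2) T] by auto
    then have "eventually (\<lambda>i. s i \<in> U \<and> s i \<in> T) F"
      by (rule eventually_conj)
    then show ?thesis
      using eventually_happens'[OF assms(3)] by blast
  qed
  then show "q \<in> X closure_of U"
    unfolding in_closure_of using limitin_topspace[OF assms(2)] by blast
qed

lemma closedin_limitin: "closedin X {l. limitin X s l F}"
proof -
  have "\<exists>T. openin X T \<and> q \<in> T \<and> T \<subseteq> topspace X - {l. limitin X s l F}"
    if "q \<in> topspace X - {l. limitin X s l F}" for q
  proof -
    have "\<not> (\<forall>U. openin X U \<and> q \<in> U \<longrightarrow> eventually (\<lambda>i. s i \<in> U) F)"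
      using that by (simp add: limitin_def)
    then obtain U where U: "openin X U" "q \<in> U" "\<not> eventually (\<lambda>i. s i \<in> U) F"
      by blast
    then have "U \<subseteq> topspace X - {l. limitin X s l F}"
      using openin_subset limitinD by fastforce
    with U show ?thesis
      by blast
  qed
  then have "openin X (topspace X - {l. limitin X s l F})"
    using openin_subopen by blast
  moreover have "{l. limitin X s l F} \<subseteq> topspace X"
    using limitin_topspace by auto
  ultimately show ?thesis
    unfolding closedin_def by blast
qed

lemma weak_plus_contraction_subtopology:
  assumes wpc: "weak_plus_contraction X f" and "closedin X L" and "f ` L \<subseteq> L"
  shows "weak_plus_contraction (subtopology X L) f"
  unfolding weak_plus_contraction_def
proof (intro allI impI ballI)
  fix \<U> x y
  assume \<U>: "(\<forall>U\<in>\<U>. openin (subtopology X L) U) \<and> topspace (subtopology X L) \<subseteq> \<Union> \<U>"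
    and x: "x \<in> topspace (subtopology X L)" and y: "y \<in> topspace (subtopology X L)"
  have L: "topspace (subtopology X L) = L"
    using assms(2) closedin_subset by fastforce
  \<comment> \<open>The orbits of \<open>x\<close> and \<open>y\<close> stay in \<open>L\<close>, so they never end up in the extra member \<open>X - L\<close>.\<close>
  define \<V> where "\<V> = {V. openin X V \<and> V \<inter> L \<in> \<U>} \<union> {topspace X - L}"
  have "\<forall>V\<in>\<V>. openin X V"
    unfolding \<V>_def using assms(2) by blast
  moreover have "topspace X \<subseteq> \<Union>\<V>"
  proof
    fix z
    assume "z \<in> topspace X"
    show "z \<in> \<Union>\<V>"
    proof (cases "z \<in> L")
      case True
      then obtain U where U: "U \<in> \<U>" "z \<in> U"
        using \<U> L by blast
      then obtain V where "openin X V" "U = V \<inter> L"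
        using \<U> by (metis inf_commute openin_subtopology)
      then show ?thesis
        unfolding \<V>_def using U by blast
    next
      case False
      then show ?thesis
        unfolding \<V>_def using \<open>z \<in> topspace X\<close> by blast
    qed
  qed
  moreover have "x \<in> topspace X" "y \<in> topspace X"
    using x y by auto
  ultimately obtain n0 W where W: "W \<in> \<V>" "\<forall>n\<ge>n0. (f ^^ n) ` {x, y} \<subseteq> W"
    using wpc unfolding weak_plus_contraction_def by meson
  have orbits_in_L: "(f ^^ n) x \<in> L" "(f ^^ n) y \<in> L" for n
    using x y L assms(3) by (induction n) auto
  then have "W \<noteq> topspace X - L"
    using W(2) by blast
  then have "W \<inter> L \<in> \<U>"
    using W(1) unfolding \<V>_def by blast
  moreover have "\<forall>n\<ge>n0. (f ^^ n) ` {x, y} \<subseteq> W \<inter> L"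
    using W(2) orbits_in_L by auto
  ultimately show "\<exists>n0. \<exists>U\<in>\<U>. \<forall>n\<ge>n0. (f ^^ n) ` {x, y} \<subseteq> U"
    by blast
qed

lemma weak_plus_contraction_orbit_limit:
  assumes wpc: "weak_plus_contraction X f" and x: "x \<in> topspace X"
  obtains l where "limitin X (\<lambda>n. (f ^^ n) x) l sequentially"
proof -
  have "\<exists>l. limitin X (\<lambda>n. (f ^^ n) x) l sequentially"
  proof (rule ccontr)
    assume no_limit: "\<nexists>l. limitin X (\<lambda>n. (f ^^ n) x) l sequentially"
    define \<U> where "\<U> = {U. openin X U \<and> \<not> eventually (\<lambda>n. (f ^^ n) x \<in> U) sequentially}"
    have "topspace X \<subseteq> \<Union>\<U>"
      using no_limit unfolding \<U>_def limitin_def by blast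
    then obtain n0 U where "U \<in> \<U>" "\<forall>n\<ge>n0. (f ^^ n) ` {x, x} \<subseteq> U"
      using wpc x unfolding weak_plus_contraction_def \<U>_def by (metis (no_types, lifting) mem_Collect_eq)
    then show False
      unfolding \<U>_def eventually_sequentially by auto
  qed
  with that show ?thesis
    by blast
qed

lemma orbit_limit_image:
  assumes "continuous_map X X f" and "limitin X (\<lambda>n. (f ^^ n) x) l sequentially"
  shows "limitin X (\<lambda>n. (f ^^ n) x) (f l) sequentially"
proof -
  have "limitin X (f \<circ> (\<lambda>n. (f ^^ n) x)) (f l) sequentially"
    using assms by (rule continuous_map_limit)
  then have "limitin X (\<lambda>n. (f ^^ (n + 1)) x) (f l) sequentially"
    by (simp add: o_def)
  then show ?thesis
    by (rule limitin_sequentially_offset_rev)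
qed

lemma invariant_inseparable_subspace:
  assumes cont: "continuous_map X X f" and wpc: "weak_plus_contraction X f"
    and x: "x \<in> topspace X"
  obtains L where "L \<noteq> {}" "L \<subseteq> topspace X"
    "continuous_map (subtopology X L) (subtopology X L) f"
    "weak_plus_contraction (subtopology X L) f"
    "\<forall>p\<in>L. L \<subseteq> nbhd_closure_core X p"
proof -
  define L where "L = {l. limitin X (\<lambda>n. (f ^^ n) x) l sequentially}"
  obtain l where "limitin X (\<lambda>n. (f ^^ n) x) l sequentially"
    using wpc x by (rule weak_plus_contraction_orbit_limit)
  then have "L \<noteq> {}"
    unfolding L_def by blast
  moreover have L_topspace: "L \<subseteq> topspace X"
    unfolding L_def using limitin_topspace by auto
  moreover have "f ` L \<subseteq> L"
    unfolding L_def using orbit_limit_image[OF cont] by blast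
  then have "continuous_map (subtopology X L) (subtopology X L) f"
    "weak_plus_contraction (subtopology X L) f"
    using L_topspace continuous_map_from_subtopology[OF cont]
      weak_plus_contraction_subtopology[OF wpc closedin_limitin]
    unfolding continuous_map_in_subtopology L_def by auto
  moreover have "\<forall>p\<in>L. L \<subseteq> nbhd_closure_core X p"
    using limitin_in_nbhd_closure_core unfolding L_def by fastforce
  ultimately show ?thesis
    using that by blast
qed

lemma invariant_inseparable_subset:
  assumes "S \<subseteq> topspace X" and "S \<noteq> {}"
    and cont: "continuous_map (subtopology X S) (subtopology X S) f"
    and wpc: "weak_plus_contraction (subtopology X S) f"
  obtains L where "L \<noteq> {}" "L \<subseteq> S"
    "continuous_map (subtopology X L) (subtopology X L) f"
    "weak_plus_contraction (subtopology X L) f"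
    "\<forall>p\<in>L. L \<subseteq> nbhd_closure_core X p"
proof -
  have S: "topspace (subtopology X S) = S"
    using assms(1) by (simp add: inf_absorb2)
  then obtain x where x: "x \<in> topspace (subtopology X S)"
    using assms(2) by blast
  obtain L where L: "L \<noteq> {}" "L \<subseteq> topspace (subtopology X S)"
    "continuous_map (subtopology (subtopology X S) L) (subtopology (subtopology X S) L) f"
    "weak_plus_contraction (subtopology (subtopology X S) L) f"
    "\<forall>p\<in>L. L \<subseteq> nbhd_closure_core (subtopology X S) p"
    by (rule invariant_inseparable_subspace[OF cont wpc x])
  have LS: "L \<subseteq> S"
    using L(2) unfolding S .
  have "subtopology (subtopology X S) L = subtopology X L"
    using LS by (simp add: subtopology_subtopology inf_absorb2)
  moreover have "L \<subseteq> nbhd_closure_core X p" if "p \<in> L" for p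
    using L(5) that nbhd_closure_core_subtopology_subset[of p S X] LS by blast
  ultimately show ?thesis
    using that L(1,3,4) LS by simp
qed

text \<open>Stated for subspaces because the inductive step applies the hypothesis to the subspace
  \<open>L\<close> of \<open>[p]\<close>, not to \<open>[p]\<close> itself.\<close>

lemma peripherally_Hausdorff_fixed_point:
  assumes "peripherally_Hausdorff X" and "S \<subseteq> topspace X" and "S \<noteq> {}"
    and "continuous_map (subtopology X S) (subtopology X S) f"
    and "weak_plus_contraction (subtopology X S) f"
  shows "\<exists>x\<in>S. f x = x"
  using assms
proof (induction arbitrary: S f rule: peripherally_Hausdorff.induct)
  case (zero X)
  obtain L where L: "L \<noteq> {}" "L \<subseteq> S"
    "continuous_map (subtopology X L) (subtopology X L) f"
    "weak_plus_contraction (subtopology X L) f"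
    "\<forall>p\<in>L. L \<subseteq> nbhd_closure_core X p"
    by (rule invariant_inseparable_subset[OF zero.prems])
  then obtain p where p: "p \<in> L"
    by blast
  have "topspace (subtopology X L) = L"
    using L(2) zero.prems(1) by auto
  then have "f p \<in> L"
    using continuous_map_image_subset_topspace[OF L(3)] p by blast
  moreover have "L \<subseteq> {p}"
    using L(2,5) p zero.prems(1) nbhd_closure_core_Hausdorff_subset[OF zero.hyps, of p] by blast
  ultimately show ?case
    using p L(2) by blast
next
  case (step X)
  obtain L where L: "L \<noteq> {}" "L \<subseteq> S"
    "continuous_map (subtopology X L) (subtopology X L) f"
    "weak_plus_contraction (subtopology X L) f"
    "\<forall>p\<in>L. L \<subseteq> nbhd_closure_core X p"
    by (rule invariant_inseparable_subset[OF step.prems])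
  then obtain p where p: "p \<in> L"
    by blast
  have "p \<in> topspace X" "L \<subseteq> topspace (subtopology X (nbhd_closure_core X p))"
    using L(2,5) p step.prems(1) by auto
  moreover have "subtopology (subtopology X (nbhd_closure_core X p)) L = subtopology X L"
    using L(5) p by (simp add: subtopology_subtopology inf_absorb2)
  ultimately have "\<exists>x\<in>L. f x = x"
    using step.IH L(1,3,4) by simp
  then show ?case
    using L(2) by blast
qed

lemma peripherally_Hausdorff_imp_t1_space: "peripherally_Hausdorff X \<Longrightarrow> t1_space X"
  by (cases rule: peripherally_Hausdorff.cases) (auto simp: Hausdorff_imp_t1_space)

lemma weak_plus_contraction_fixed_point_unique:
  assumes "t1_space X" and wpc: "weak_plus_contraction X f"
    and x: "x \<in> topspace X" "f x = x" and y: "y \<in> topspace X" "f y = y"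
  shows "x = y"
proof (rule ccontr)
  assume "x \<noteq> y"
  define \<U> where "\<U> = {topspace X - {x}, topspace X - {y}}"
  have "\<forall>U\<in>\<U>. openin X U"
    unfolding \<U>_def using assms(1) x(1) y(1)
    by (simp add: openin_diff t1_space_closedin_singleton)
  moreover have "topspace X \<subseteq> \<Union>\<U>"
    unfolding \<U>_def using \<open>x \<noteq> y\<close> by auto
  ultimately obtain n0 U where U: "U \<in> \<U>" "\<forall>n\<ge>n0. (f ^^ n) ` {x, y} \<subseteq> U"
    using wpc x(1) y(1) unfolding weak_plus_contraction_def by meson
  have "(f ^^ n0) x = x" "(f ^^ n0) y = y"
    using x(2) y(2) by (induction n0) auto
  then have "{x, y} \<subseteq> U"
    using U(2) by force
  then show False
    using U(1) unfolding \<U>_def by auto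
qed

theorem theorem23:
  fixes X :: "'a topology" and f :: "'a \<Rightarrow> 'a"
  assumes "topspace X \<noteq> {}"
    and "peripherally_Hausdorff X"
    and "continuous_map X X f"
    and "weak_plus_contraction X f"
  shows "\<exists>!x. x \<in> topspace X \<and> f x = x"
proof -
  obtain x where "x \<in> topspace X" "f x = x"
    using peripherally_Hausdorff_fixed_point[OF assms(2) order_refl assms(1)] assms(3,4)
    by (auto simp: subtopology_topspace)
  moreover have "t1_space X"
    using assms(2) by (rule peripherally_Hausdorff_imp_t1_space)
  ultimately show ?thesis
    using weak_plus_contraction_fixed_point_unique[OF _ assms(4)] by blast
qed

end
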